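(* For all integers $k\ge 3$ and $n\ge 1$, $$r_o(C_k,K_{n,n})\;\le\;2n^3+(k-3)\,n(2n-1)+n^2.$$
   Context: An ordered graph $G$ on $n$ vertices has vertex set $[n]=\{1,\dots,n\}$ with the natural linear order. An ordered graph $G$ on $[n]$ is contained in an ordered graph $H$ on a linearly ordered vertex set if there is an injective map $f$ from $[n]$ to $V(H)$ with $f(i)<f(j)$ whenever $i<j$ and $f(i)f(j)\in E(H)$ whenever $ij\in E(G)$; such an image is an ordered copy of $G$. $C_k$ is the ordered cycle on $[k]$ with edges $\{i,i+1\}$ for $1\le i\le k-1$ together with $\{1,k\}$. $K_{n,n}$ is the ordered complete bipartite graph on $[2n]$ with edge set $\{ij: 1\le i\le n<j\le 2n\}$. The online ordered Ramsey game for $(G_1,G_2)$ is played by Builder and Painter on the vertex set $\mathbb N$ with its natural order. On each turn Builder selects a previously unselected pair of vertices (an edge) and Painter then colors it red or blue. Builder wins as soon as the colored edges contain an ordered red copy of $G_1$ or an ordered blue copy of $G_2$; Builder tries to minimize and Painter tries to maximize the number of turns. The online ordered Ramsey number $r_o(G_1,G_2)$ is the number of turns after which Builder wins when both players play optimally. *)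

theory Defs
  imports Main "HOL-Library.Extended_Nat"
begin

(* An ordered graph on [m] = {1..m} is given by its size m and its edge set,
   each edge written as a pair (i,j) with i < j. *)
type_synonym ograph = "nat \<times> (nat \<times> nat) set"

definition ocontains :: "ograph \<Rightarrow> (nat \<times> nat) set \<Rightarrow> bool" where
  "ocontains G E \<longleftrightarrow>
     (\<exists>f::nat \<Rightarrow> nat. strict_mono_on {1..fst G} f \<and>
        (\<forall>(i,j)\<in>snd G. (f i, f j) \<in> E))"

definition ocycle :: "nat \<Rightarrow> ograph" where
  "ocycle k = (k, {(i, i+1) | i. 1 \<le> i \<and> i \<le> k - 1} \<union> {(1, k)})"

definition oKnn :: "nat \<Rightarrow> ograph" where
  "oKnn n = (2*n, {(i,j). 1 \<le> i \<and> i \<le> n \<and> n < j \<and> j \<le> 2*n})"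

definition builder_won :: "ograph \<Rightarrow> ograph \<Rightarrow> (nat \<times> nat) set \<Rightarrow> (nat \<times> nat) set \<Rightarrow> bool" where
  "builder_won G1 G2 R B \<longleftrightarrow> ocontains G1 R \<or> ocontains G2 B"

fun builder_wins_within :: "ograph \<Rightarrow> ograph \<Rightarrow> nat \<Rightarrow> (nat \<times> nat) set \<Rightarrow> (nat \<times> nat) set \<Rightarrow> bool" where
  "builder_wins_within G1 G2 0 R B = builder_won G1 G2 R B"
| "builder_wins_within G1 G2 (Suc t) R B =
     (builder_won G1 G2 R B \<or>
      (\<exists>a b. a < b \<and> (a,b) \<notin> R \<and> (a,b) \<notin> B \<and>
         builder_wins_within G1 G2 t (insert (a,b) R) B \<and>
         builder_wins_within G1 G2 t R (insert (a,b) B)))"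

(* online ordered Ramsey number; infinity if Builder cannot force a win *)
definition online_ordered_ramsey :: "ograph \<Rightarrow> ograph \<Rightarrow> enat" where
  "online_ordered_ramsey G1 G2 = (INF t \<in> {t. builder_wins_within G1 G2 t {} {}}. enat t)"

end

theory Submission
  imports Defs
begin

text \<open>
  Builder first joins the left vertices \<open>0, \<dots>, n - 1\<close> to \<open>2 n\<^sup>2\<close> widely spaced candidate
  vertices. Unless \<open>n\<close> candidates see only blue edges (a blue \<open>K\<^sub>n\<^sub>,\<^sub>n\<close>), pigeonhole gives a
  left vertex \<open>l\<close> with \<open>2 n\<close> red edges to candidates: the lower \<open>n\<close> of them form a set \<open>A\<close>
  of ends of red increasing paths from \<open>l\<close>, the upper \<open>n\<close> a set \<open>C\<close> of red neighbours of \<open>l\<close>.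
  In each of \<open>k - 3\<close> rounds Builder joins \<open>A\<close> to \<open>2 n - 1\<close> fresh vertices between \<open>A\<close> and
  \<open>C\<close>: either \<open>n\<close> of them receive only blue edges (a blue \<open>K\<^sub>n\<^sub>,\<^sub>n\<close>), or \<open>n\<close> of them receive
  a red edge and replace \<open>A\<close>, the red paths becoming one edge longer. Finally Builder joins
  \<open>A\<close> to \<open>C\<close>: a red edge closes a red \<open>C\<^sub>k\<close> through \<open>l\<close>, and otherwise \<open>A \<times> C\<close> is a blue
  \<open>K\<^sub>n\<^sub>,\<^sub>n\<close>. The three phases cost \<open>2 n\<^sup>3\<close>, \<open>(k - 3) n (2 n - 1)\<close> and \<open>n\<^sup>2\<close> turns.
\<close>

lemma builder_wins_within_if_won:
  "builder_won G1 G2 R B \<Longrightarrow> builder_wins_within G1 G2 t R B"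
  by (cases t) auto

lemma builder_wins_within_Suc:
  "builder_wins_within G1 G2 t R B \<Longrightarrow> builder_wins_within G1 G2 (Suc t) R B"
proof (induction t arbitrary: R B)
  case 0
  then show ?case by simp
next
  case (Suc t)
  show ?case
  proof (cases "builder_won G1 G2 R B")
    case True
    then show ?thesis by (rule builder_wins_within_if_won)
  next
    case False
    with Suc.prems obtain a b where ab: "a < b" "(a,b) \<notin> R" "(a,b) \<notin> B"
      "builder_wins_within G1 G2 t (insert (a,b) R) B"
      "builder_wins_within G1 G2 t R (insert (a,b) B)" by auto
    with Suc.IH show ?thesis by (subst builder_wins_within.simps) blast
  qed
qed

lemma builder_wins_within_mono:
  assumes "builder_wins_within G1 G2 t R B" "t \<le> t'"
  shows "builder_wins_within G1 G2 t' R B"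
  using assms(2) by (induction rule: dec_induct) (use assms builder_wins_within_Suc in auto)

text \<open>An edge that is already coloured need not be asked at all; the turn is then simply wasted.\<close>
lemma builder_wins_within_query:
  assumes "a < b"
    and "builder_wins_within G1 G2 t (insert (a,b) R) B"
    and "builder_wins_within G1 G2 t R (insert (a,b) B)"
  shows "builder_wins_within G1 G2 (Suc t) R B"
proof (cases "(a,b) \<in> R \<or> (a,b) \<in> B")
  case True
  with assms(2,3) show ?thesis by (metis insert_absorb builder_wins_within_Suc)
next
  case False
  with assms show ?thesis by (subst builder_wins_within.simps) blast
qed

lemma builder_wins_within_query_set:
  assumes "finite E" "\<forall>(a,b)\<in>E. a < b"
    and "\<And>F. F \<subseteq> E \<Longrightarrow> builder_wins_within G1 G2 t (R \<union> F) (B \<union> (E - F))"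
  shows "builder_wins_within G1 G2 (t + card E) R B"
  using assms
proof (induction E arbitrary: R B rule: finite_induct)
  case empty
  then show ?case using empty.prems(2)[of "{}"] by simp
next
  case (insert e E)
  obtain a b where e: "e = (a,b)" and "a < b" using insert.prems(1) by fastforce
  have "builder_wins_within G1 G2 (t + card E) (insert e R) B"
  proof (rule insert.IH)
    fix F assume "F \<subseteq> E"
    with insert.prems(2)[of "insert e F"] insert.hyps(2)
    show "builder_wins_within G1 G2 t (insert e R \<union> F) (B \<union> (E - F))"
      by (auto simp: insert_Diff_if)
  qed (use insert.prems(1) in auto)
  moreover have "builder_wins_within G1 G2 (t + card E) R (insert e B)"
  proof (rule insert.IH)
    fix F assume "F \<subseteq> E"
    moreover have "e \<notin> F" using \<open>F \<subseteq> E\<close> insert.hyps(2) by blast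
    ultimately show "builder_wins_within G1 G2 t (R \<union> F) (insert e B \<union> (E - F))"
      using insert.prems(2)[of F] by (auto simp: insert_Diff_if)
  qed (use insert.prems(1) in auto)
  ultimately show ?case
    using builder_wins_within_query[OF \<open>a < b\<close>] e insert.hyps by simp
qed

fun inc_path :: "(nat \<times> nat) set \<Rightarrow> nat \<Rightarrow> nat \<Rightarrow> nat \<Rightarrow> bool" where
  "inc_path E u 0 v \<longleftrightarrow> u = v"
| "inc_path E u (Suc m) v \<longleftrightarrow> (\<exists>w. w < v \<and> (w,v) \<in> E \<and> inc_path E u m w)"

lemma inc_path_mono: "inc_path E u m v \<Longrightarrow> E \<subseteq> E' \<Longrightarrow> inc_path E' u m v"
  by (induction m arbitrary: v) auto

lemma inc_path_embedding:
  assumes "inc_path E u m v"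
  obtains g where "strict_mono_on {..m} g" "g 0 = u" "g m = v" "\<forall>i<m. (g i, g (Suc i)) \<in> E"
proof -
  have "\<exists>g. strict_mono_on {..m} g \<and> g 0 = u \<and> g m = v \<and> (\<forall>i<m. (g i, g (Suc i)) \<in> E)"
    using assms
  proof (induction m arbitrary: v)
    case 0
    then show ?case by (intro exI[of _ "\<lambda>_. u"]) (auto intro: strict_mono_onI)
  next
    case (Suc m)
    then obtain w where w: "w < v" "(w,v) \<in> E" "inc_path E u m w"
      by auto
    with Suc.IH obtain g where
      g: "strict_mono_on {..m} g" "g 0 = u" "g m = w" "\<forall>i<m. (g i, g (Suc i)) \<in> E"
      by blast
    have "g i < v" if "i \<le> m" for i
      using strict_mono_on_leD[OF g(1), of i m] that g(3) w(1) by auto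
    then have "strict_mono_on {..Suc m} (g(Suc m := v))"
      using g(1) by (auto intro!: strict_mono_onI simp: le_Suc_eq strict_mono_on_def)
    moreover have "\<forall>i<Suc m. ((g(Suc m := v)) i, (g(Suc m := v)) (Suc i)) \<in> E"
      using g w by (auto simp: less_Suc_eq)
    moreover have "(g(Suc m := v)) 0 = u" "(g(Suc m := v)) (Suc m) = v"
      using g(2) by simp_all
    ultimately show ?case by blast
  qed
  with that show ?thesis by blast
qed

lemma ocontains_ocycleI:
  assumes "inc_path R u (k - 1) v" "(u,v) \<in> R"
  shows "ocontains (ocycle k) R"
proof -
  obtain g where g: "strict_mono_on {..k-1} g" "g 0 = u" "g (k-1) = v"
    "\<forall>i<k-1. (g i, g (Suc i)) \<in> R"
    using inc_path_embedding[OF assms(1)] by blast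
  have "strict_mono_on {1..k} (\<lambda>i. g (i - 1))"
    by (rule strict_mono_onI) (auto intro: strict_mono_onD[OF g(1)])
  moreover have "(g (i - 1), g (j - 1)) \<in> R" if "(i,j) \<in> snd (ocycle k)" for i j
  proof -
    have "(g (i - 1), g (Suc (i - 1))) \<in> R" if "1 \<le> i" "i \<le> k - 1"
      using g(4)[rule_format, of "i - 1"] that by simp
    with \<open>(i,j) \<in> snd (ocycle k)\<close> g assms(2) show ?thesis by (auto simp: ocycle_def)
  qed
  ultimately show ?thesis
    unfolding ocontains_def by (auto simp: ocycle_def)
qed

lemma ocontains_oKnnI:
  assumes "finite A" "finite C" "card A = n" "card C = n"
    and "\<forall>a\<in>A. \<forall>c\<in>C. a < c \<and> (a,c) \<in> E"
  shows "ocontains (oKnn n) E"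
proof -
  define xs where "xs = sorted_list_of_set A"
  define ys where "ys = sorted_list_of_set C"
  have xs: "sorted_wrt (<) xs" "set xs = A" "length xs = n"
    and ys: "sorted_wrt (<) ys" "set ys = C" "length ys = n"
    using assms(1-4) by (simp_all add: xs_def ys_def)
  define f where "f i = (if i \<le> n then xs ! (i - 1) else ys ! (i - n - 1))" for i
  have f_A: "f i \<in> A" if "1 \<le> i" "i \<le> n" for i
    using that xs by (auto simp: f_def)
  have f_C: "f j \<in> C" if "n < j" "j \<le> 2 * n" for j
    using that ys by (auto simp: f_def)
  have "strict_mono_on {1..fst (oKnn n)} f"
    unfolding oKnn_def fst_conv
  proof (rule strict_mono_onI)
    fix i j assume "i \<in> {1..2 * n}" "j \<in> {1..2 * n}" "i < j"
    then consider "j \<le> n" | "i \<le> n" "n < j" | "n < i"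
      by fastforce
    then show "f i < f j"
    proof cases
      case 1
      with \<open>i \<in> _\<close> \<open>i < j\<close> show ?thesis
        using sorted_wrt_nth_less[OF xs(1), of "i - 1" "j - 1"] xs(3) by (simp add: f_def)
    next
      case 2
      with \<open>i \<in> _\<close> \<open>j \<in> _\<close> show ?thesis using f_A f_C assms(5) by simp
    next
      case 3
      with \<open>j \<in> _\<close> \<open>i < j\<close> show ?thesis
        using sorted_wrt_nth_less[OF ys(1), of "i - n - 1" "j - n - 1"] ys(3) by (simp add: f_def)
    qed
  qed
  moreover have "\<forall>(i,j)\<in>snd (oKnn n). (f i, f j) \<in> E"
    using f_A f_C assms(5) by (auto simp: oKnn_def)
  ultimately show ?thesis
    unfolding ocontains_def by blast
qed

lemma obtain_lower_upper_subsets: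
  fixes J :: "nat set"
  assumes "finite J" "2 * n \<le> card J"
  obtains A C where "A \<subseteq> J" "C \<subseteq> J" "card A = n" "card C = n" "\<forall>a\<in>A. \<forall>c\<in>C. a < c"
proof -
  define xs where "xs = sorted_list_of_set J"
  have xs: "sorted_wrt (<) xs" "set xs = J" "length xs = card J" "distinct xs"
    using assms(1) by (simp_all add: xs_def)
  let ?A = "set (take n xs)" and ?C = "set (take n (drop n xs))"
  have "?A \<subseteq> J" "?C \<subseteq> J"
    using xs(2) set_take_subset set_drop_subset by fastforce+
  moreover have "card ?A = n" "card ?C = n"
    using xs(3,4) assms(2) by (simp_all add: distinct_card)
  moreover have "a < c" if a: "a \<in> ?A" and c: "c \<in> ?C" for a c
  proof -
    obtain i where "i < n" "a = xs ! i"
      using a xs(3) assms(2) by (auto simp: in_set_conv_nth)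
    moreover obtain i' where "i' < n" "c = xs ! (n + i')"
      using c xs(3) assms(2) by (auto simp: in_set_conv_nth)
    ultimately show ?thesis
      using sorted_wrt_nth_less[OF xs(1), of i "n + i'"] xs(3) assms(2) by simp
  qed
  ultimately show ?thesis
    by (intro that[of ?A ?C]) auto
qed

lemma pigeonhole_subset_or_Diff:
  assumes "finite V" "card V = 2 * n - 1" "W \<subseteq> V"
  shows "n \<le> card W \<or> n \<le> card (V - W)"
proof -
  have "card W + card (V - W) = 2 * n - 1"
    using assms card_mono[of V W] by (simp add: card_Diff_subset finite_subset)
  then show ?thesis
    by linarith
qed

lemma pigeonhole_red_star:
  assumes "finite C" "card C = 2 * n^2" "card {c \<in> C. \<forall>l<n. (l,c) \<notin> F} < n"
  shows "\<exists>l<n. 2 * n \<le> card {c \<in> C. (l,c) \<in> F}"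
proof (rule ccontr)
  define S where "S l = {c \<in> C. (l,c) \<in> F}" for l
  assume "\<not> (\<exists>l<n. 2 * n \<le> card {c \<in> C. (l,c) \<in> F})"
  then have S_small: "card (S l) \<le> 2 * n - 1" if "l \<in> {..<n}" for l
    using that by (auto simp: S_def)
  have "card C \<le> card ({c \<in> C. \<forall>l<n. (l,c) \<notin> F} \<union> (\<Union>l<n. S l))"
    using assms(1) by (intro card_mono) (auto simp: S_def)
  also have "\<dots> \<le> card {c \<in> C. \<forall>l<n. (l,c) \<notin> F} + card (\<Union>l<n. S l)"
    by (rule card_Un_le)
  also have "card (\<Union>l<n. S l) \<le> (\<Sum>l<n. card (S l))"
    by (rule card_UN_le) simp
  also have "(\<Sum>l<n. card (S l)) \<le> n * (2 * n - 1)"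
    using sum_bounded_above[of "{..<n}" "\<lambda>l. card (S l)" "2 * n - 1"] S_small by simp
  finally have "2 * n^2 < n + n * (2 * n - 1)"
    using assms(2,3) by linarith
  moreover have "n + n * (2 * n - 1) = 2 * n^2"
    using assms(3) by (cases n) (auto simp: power2_eq_square algebra_simps)
  ultimately show False
    by simp
qed

lemma builder_wins_within_close_cycles:
  assumes "finite A" "finite C" "card A = n" "card C = n"
    and "\<forall>a\<in>A. inc_path R l m a" "\<forall>c\<in>C. (l,c) \<in> R" "\<forall>a\<in>A. \<forall>c\<in>C. a < c"
  shows "builder_wins_within (ocycle (m + 2)) (oKnn n) (n^2) R B"
proof -
  have "builder_wins_within (ocycle (m + 2)) (oKnn n) (0 + card (A \<times> C)) R B"
  proof (rule builder_wins_within_query_set)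
    fix F assume F: "F \<subseteq> A \<times> C"
    show "builder_wins_within (ocycle (m + 2)) (oKnn n) 0 (R \<union> F) (B \<union> (A \<times> C - F))"
    proof (cases "F = {}")
      case True
      with assms have "ocontains (oKnn n) (B \<union> (A \<times> C - F))"
        by (intro ocontains_oKnnI[of A C]) auto
      then show ?thesis by (simp add: builder_won_def)
    next
      case False
      then obtain a c where "(a,c) \<in> F" "a \<in> A" "c \<in> C" using F by auto
      with assms(5,7) have "inc_path (R \<union> F) l (Suc m) c"
        by (auto intro: inc_path_mono)
      with assms(6) \<open>c \<in> C\<close> have "ocontains (ocycle (m + 2)) (R \<union> F)"
        by (intro ocontains_ocycleI[of _ l _ c]) auto
      then show ?thesis by (simp add: builder_won_def)
    qed
  qed (use assms in auto)
  then show ?thesis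
    using assms(1-4) by (simp add: card_cartesian_product power2_eq_square)
qed

lemma builder_wins_within_extend_paths:
  assumes "finite A" "card A = n" "\<forall>a\<in>A. inc_path R l m a \<and> a < x"
    and next_layer: "\<And>A' R' B'. R \<subseteq> R' \<Longrightarrow> finite A' \<Longrightarrow> card A' = n \<Longrightarrow>
      \<forall>a\<in>A'. inc_path R' l (Suc m) a \<and> a < x + 2 * n \<Longrightarrow> builder_wins_within G (oKnn n) t R' B'"
  shows "builder_wins_within G (oKnn n) (t + n * (2 * n - 1)) R B"
proof -
  define V where "V = {x..<x + (2 * n - 1)}"
  have A_below_V: "\<forall>a\<in>A. \<forall>v\<in>V. a < v"
    using assms(3) by (fastforce simp: V_def)
  have "builder_wins_within G (oKnn n) (t + card (A \<times> V)) R B"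
  proof (rule builder_wins_within_query_set)
    fix F assume F: "F \<subseteq> A \<times> V"
    define V_red where "V_red = {v \<in> V. \<exists>a\<in>A. (a,v) \<in> F}"
    have "finite V" "card V = 2 * n - 1" "V_red \<subseteq> V"
      by (auto simp: V_def V_red_def)
    then consider "n \<le> card (V - V_red)" | "n \<le> card V_red"
      using pigeonhole_subset_or_Diff by blast
    then show "builder_wins_within G (oKnn n) t (R \<union> F) (B \<union> (A \<times> V - F))"
    proof cases
      case 1
      then obtain V' where "V' \<subseteq> V - V_red" "card V' = n" "finite V'"
        by (meson obtain_subset_with_card_n)
      with assms(1,2) A_below_V have "ocontains (oKnn n) (B \<union> (A \<times> V - F))"
        by (intro ocontains_oKnnI[of A V']) (auto simp: V_red_def)
      then show ?thesis by (intro builder_wins_within_if_won) (simp add: builder_won_def)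
    next
      case 2
      then obtain V' where V': "V' \<subseteq> V_red" "card V' = n" "finite V'"
        by (meson obtain_subset_with_card_n)
      have "inc_path (R \<union> F) l (Suc m) v \<and> v < x + 2 * n" if "v \<in> V'" for v
      proof -
        obtain a where "a \<in> A" "(a,v) \<in> F" "v \<in> V"
          using V' \<open>v \<in> V'\<close> by (auto simp: V_red_def)
        moreover from \<open>a \<in> A\<close> have "inc_path (R \<union> F) l m a"
          using assms(3) inc_path_mono by blast
        moreover have "a < v"
          using A_below_V \<open>a \<in> A\<close> \<open>v \<in> V\<close> by blast
        ultimately have "inc_path (R \<union> F) l (Suc m) v"
          by auto
        moreover have "v < x + 2 * n"
          using \<open>v \<in> V\<close> by (simp add: V_def) linarith
        ultimately show ?thesis ..
      qed
      with V' show ?thesis by (intro next_layer) auto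
    qed
  qed (use assms(1) A_below_V in \<open>auto simp: V_def\<close>)
  then show ?thesis
    using assms(1,2) by (simp add: card_cartesian_product V_def)
qed

lemma builder_wins_within_layers:
  assumes "finite A" "card A = n" "finite C" "card C = n"
    and "\<forall>a\<in>A. inc_path R l m a \<and> a < x" "\<forall>c\<in>C. (l,c) \<in> R \<and> x + 2 * n * r \<le> c"
  shows "builder_wins_within (ocycle (m + r + 2)) (oKnn n) (n^2 + r * (n * (2 * n - 1))) R B"
  using assms(1,2,5,6)
proof (induction r arbitrary: m A x R B)
  case (0 m A x R B)
  then have "\<forall>a\<in>A. \<forall>c\<in>C. a < c"
    by fastforce
  with 0 assms(3,4) show ?case
    using builder_wins_within_close_cycles[of A C n R l m B] by simp
next
  case (Suc r m A x R B)
  have "builder_wins_within (ocycle (m + Suc r + 2)) (oKnn n)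
      ((n^2 + r * (n * (2 * n - 1))) + n * (2 * n - 1)) R B"
  proof (rule builder_wins_within_extend_paths)
    fix A' R' B'
    assume "R \<subseteq> R'" "finite A'" "card A' = n"
      and A': "\<forall>a\<in>A'. inc_path R' l (Suc m) a \<and> a < x + 2 * n"
    from \<open>R \<subseteq> R'\<close> Suc.prems(4) have "\<forall>c\<in>C. (l,c) \<in> R' \<and> (x + 2 * n) + 2 * n * r \<le> c"
      by (auto simp: algebra_simps)
    with \<open>finite A'\<close> \<open>card A' = n\<close> A' show "builder_wins_within (ocycle (m + Suc r + 2)) (oKnn n)
        (n^2 + r * (n * (2 * n - 1))) R' B'"
      using Suc.IH[where m = "Suc m" and A = A' and x = "x + 2 * n" and R = R'] by simp
  qed (use Suc.prems in auto)
  then show ?case by (simp only: mult_Suc add_ac)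
qed

lemma builder_wins_within_spaced_red_star:
  assumes "finite A" "finite C" "card A = n" "card C = n"
    and "\<forall>c\<in>A \<union> C. l < c \<and> (l,c) \<in> R" "\<forall>a\<in>A. \<forall>c\<in>C. a + 2 * n * r < c"
  shows "builder_wins_within (ocycle (r + 3)) (oKnn n) (n^2 + r * (n * (2 * n - 1))) R B"
proof -
  obtain x where "\<forall>a\<in>A. a < x" "\<forall>c\<in>C. x + 2 * n * r \<le> c"
  proof (cases "A = {}")
    case True
    with assms(1-4) have "C = {}" by auto
    with True that show ?thesis by blast
  next
    case False
    with assms(1) have "Max A \<in> A" "\<forall>a\<in>A. a \<le> Max A"
      by simp_all
    with assms(6) show ?thesis
      by (intro that[of "Max A + 1"]) (auto simp: Suc_le_eq)
  qed
  with assms have "builder_wins_within (ocycle (1 + r + 2)) (oKnn n) (n^2 + r * (n * (2 * n - 1))) R B"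
    by (intro builder_wins_within_layers[of A n C R l 1 x r B]) auto
  moreover have "1 + r + 2 = r + 3"
    by simp
  ultimately show ?thesis
    by metis
qed

lemma builder_wins_within_red_star:
  assumes "finite C" "card C = 2 * n^2" "\<forall>c\<in>C. n \<le> c"
    and red_star: "\<And>l A' C' R' B'. l < n \<Longrightarrow> A' \<subseteq> C \<Longrightarrow> C' \<subseteq> C \<Longrightarrow> card A' = n \<Longrightarrow>
      card C' = n \<Longrightarrow> \<forall>a\<in>A'. \<forall>c\<in>C'. a < c \<Longrightarrow> \<forall>c\<in>A' \<union> C'. (l,c) \<in> R' \<Longrightarrow>
      builder_wins_within G (oKnn n) t R' B'"
  shows "builder_wins_within G (oKnn n) (t + 2 * n^3) R B"
proof -
  have "builder_wins_within G (oKnn n) (t + card ({..<n} \<times> C)) R B"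
  proof (rule builder_wins_within_query_set)
    fix F assume F: "F \<subseteq> {..<n} \<times> C"
    define C_blue where "C_blue = {c \<in> C. \<forall>l<n. (l,c) \<notin> F}"
    define S where "S l = {c \<in> C. (l,c) \<in> F}" for l
    show "builder_wins_within G (oKnn n) t (R \<union> F) (B \<union> ({..<n} \<times> C - F))"
    proof (cases "n \<le> card C_blue")
      case True
      then obtain C' where "C' \<subseteq> C_blue" "card C' = n" "finite C'"
        by (meson obtain_subset_with_card_n)
      with assms(3) have "ocontains (oKnn n) (B \<union> ({..<n} \<times> C - F))"
        by (intro ocontains_oKnnI[of "{..<n}" C']) (auto simp: C_blue_def dest: order.strict_trans2)
      then show ?thesis by (intro builder_wins_within_if_won) (simp add: builder_won_def)
    next
      case False
      then obtain l where "l < n" "2 * n \<le> card (S l)"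
        using pigeonhole_red_star[OF assms(1,2), of F] unfolding C_blue_def S_def by auto
      moreover have "finite (S l)"
        using assms(1) by (simp add: S_def)
      ultimately obtain A' C' where "A' \<subseteq> S l" "C' \<subseteq> S l" "card A' = n" "card C' = n"
          "\<forall>a\<in>A'. \<forall>c\<in>C'. a < c"
        by (meson obtain_lower_upper_subsets)
      with \<open>l < n\<close> show ?thesis
        by (intro red_star[of l A' C']) (auto simp: S_def)
    qed
  qed (use assms(1,3) in \<open>auto dest: order.strict_trans2\<close>)
  then show ?thesis
    using assms(1,2) by (simp add: card_cartesian_product power2_eq_square power3_eq_cube algebra_simps)
qed

lemma obtain_spaced_set:
  obtains C :: "nat set"
  where "finite C" "card C = N" "\<forall>c\<in>C. n \<le> c" "\<forall>a\<in>C. \<forall>c\<in>C. a < c \<longrightarrow> a + d < c"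
proof
  let ?C = "(\<lambda>j. n + Suc d * j) ` {..<N}"
  have "inj_on (\<lambda>j. n + Suc d * j) {..<N}"
    by (intro inj_onI) (simp del: mult_Suc)
  then show "finite ?C" "card ?C = N" "\<forall>c\<in>?C. n \<le> c"
    by (simp_all add: card_image)
  show "\<forall>a\<in>?C. \<forall>c\<in>?C. a < c \<longrightarrow> a + d < c"
  proof (intro ballI impI)
    fix a c assume "a \<in> ?C" "c \<in> ?C" "a < c"
    then obtain i j where ij: "a = n + Suc d * i" "c = n + Suc d * j" "i < j"
      by (auto simp del: mult_Suc)
    then have "Suc d * Suc i \<le> Suc d * j"
      by (intro mult_le_mono2) simp
    with ij show "a + d < c"
      by simp
  qed
qed

theorem theorem4:
  fixes k n :: nat
  assumes "k \<ge> 3" and "n \<ge> 1"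
  shows "online_ordered_ramsey (ocycle k) (oKnn n)
           \<le> enat (2 * n ^ 3 + (k - 3) * n * (2 * n - 1) + n ^ 2)"
proof -
  \<comment> \<open>the spacing leaves room for the \<open>2 * n\<close> fresh vertices of each of the \<open>k - 3\<close> rounds\<close>
  obtain C :: "nat set" where C: "finite C" "card C = 2 * n^2" "\<forall>c\<in>C. n \<le> c"
    and spaced: "\<forall>a\<in>C. \<forall>c\<in>C. a < c \<longrightarrow> a + 2 * n * (k - 3) < c"
    by (rule obtain_spaced_set)
  have "builder_wins_within (ocycle k) (oKnn n) ((n^2 + (k - 3) * (n * (2 * n - 1))) + 2 * n^3) {} {}"
  proof (rule builder_wins_within_red_star[OF C])
    fix l A' C' R' B'
    assume "l < n" "A' \<subseteq> C" "C' \<subseteq> C" "card A' = n" "card C' = n"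
      "\<forall>a\<in>A'. \<forall>c\<in>C'. a < c" "\<forall>c\<in>A' \<union> C'. (l,c) \<in> R'"
    with C spaced have "builder_wins_within (ocycle (k - 3 + 3)) (oKnn n)
        (n^2 + (k - 3) * (n * (2 * n - 1))) R' B'"
      by (intro builder_wins_within_spaced_red_star[of A' C' n l R' "k - 3" B'])
        (blast intro: finite_subset order.strict_trans2)+
    with assms(1) show "builder_wins_within (ocycle k) (oKnn n)
        (n^2 + (k - 3) * (n * (2 * n - 1))) R' B'"
      by simp
  qed
  then have "builder_wins_within (ocycle k) (oKnn n) (2 * n ^ 3 + (k - 3) * n * (2 * n - 1) + n ^ 2) {} {}"
    by (rule builder_wins_within_mono) (simp add: mult.assoc)
  then show ?thesis
    unfolding online_ordered_ramsey_def by (intro INF_lower) simp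
qed

end
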